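(* Let $X=(X_1,X_2)$ be a two-good random valuation with $X_1,X_2$ independent. Then \[ \textsc{Rev}(X_1,X_2)\le\Big(\sqrt{\textsc{Rev}(X_1)}+\sqrt{\textsc{Rev}(X_2)}\Big)^2 . \]
   Context: A two-good random valuation is a random vector in $\mathbb{R}_+^2$. A mechanism is a pair $\mu=(q,s)$ of Borel functions $q:\mathbb{R}_+^2\to[0,1]^2$, $s:\mathbb{R}_+^2\to\mathbb{R}$, with buyer payoff $b(x)=q(x)\cdot x-s(x)$; IR: $b(x)\ge0$ for all $x$; IC: $b(x)\ge q(\tilde x)\cdot x-s(\tilde x)$ for all $x,\tilde x$. $\textsc{Rev}(X)=\sup\mathbb{E}[s(X)]$ over all IC and IR mechanisms; for one good, $\textsc{Rev}(X_i)=\sup_{p\ge0}p\,\mathbb{P}[X_i\ge p]$. *)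

theory Defs
  imports "HOL-Probability.Probability"
begin

definition nonneg2 :: "(real \<times> real) set" where
  "nonneg2 = {x. fst x \<ge> 0 \<and> snd x \<ge> 0}"

definition dot2 :: "real \<times> real \<Rightarrow> real \<times> real \<Rightarrow> real" where
  "dot2 a x = fst a * fst x + snd a * snd x"

definition IC_IR_mechanism :: "(real \<times> real \<Rightarrow> real \<times> real) \<Rightarrow> (real \<times> real \<Rightarrow> real) \<Rightarrow> bool" where
  "IC_IR_mechanism q s \<longleftrightarrow>
     q \<in> borel_measurable borel \<and> s \<in> borel_measurable borel \<and>
     (\<forall>x\<in>nonneg2. fst (q x) \<in> {0..1} \<and> snd (q x) \<in> {0..1}) \<and>
     (\<forall>x\<in>nonneg2. dot2 (q x) x - s x \<ge> 0) \<and>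
     (\<forall>x\<in>nonneg2. \<forall>y\<in>nonneg2. dot2 (q x) x - s x \<ge> dot2 (q y) x - s y)"

definition ext_expectation :: "'a measure \<Rightarrow> ('a \<Rightarrow> real) \<Rightarrow> ereal" where
  "ext_expectation M f =
     enn2ereal (\<integral>\<^sup>+ w. ennreal (f w) \<partial>M) - enn2ereal (\<integral>\<^sup>+ w. ennreal (- f w) \<partial>M)"

definition Rev2 :: "'a measure \<Rightarrow> ('a \<Rightarrow> real) \<Rightarrow> ('a \<Rightarrow> real) \<Rightarrow> ereal" where
  "Rev2 M X1 X2 = (SUP qs \<in> {(q, s). IC_IR_mechanism q s}.
                     ext_expectation M (\<lambda>w. snd qs (X1 w, X2 w)))"

definition Rev1 :: "'a measure \<Rightarrow> ('a \<Rightarrow> real) \<Rightarrow> ereal" where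
  "Rev1 M X = (SUP p \<in> {0..}. ereal (p * measure M {w \<in> space M. X w \<ge> p}))"

end

theory Submission
  imports Defs
begin

text \<open>
  Let \<open>B = q \<cdot> x - s\<close> be the buyer's utility under an IC and IR mechanism. Freezing the value
  \<open>c\<close> of good 2 leaves a single-good mechanism for good 1 with monotone allocation
  \<open>q\<^sub>1(\<cdot>, c)\<close> and payment \<open>P\<^sub>1(a, c) = q\<^sub>1(a, c) a - (B(a, c) - B(0, c))\<close>; symmetrically for good 2.
  Since \<open>q\<close> is a subgradient of \<open>B\<close>, the payment splits as
  \<open>s(a, c) \<le> P\<^sub>1(a, c) + P\<^sub>2(a, c) + min a c\<close>. By independence and Fubini, each induced
  single-good mechanism earns at most \<open>Rev(X\<^sub>i) = r\<^sub>i\<close>, and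
  \<open>E[min X\<^sub>1 X\<^sub>2] = \<integral> P[X\<^sub>1 \<ge> t] P[X\<^sub>2 \<ge> t] dt \<le> \<integral> min 1 (r\<^sub>1 r\<^sub>2 / t\<^sup>2) dt = 2 sqrt (r\<^sub>1 r\<^sub>2)\<close>.
  Both integral bounds are proved by discretising along a geometric grid \<open>g \<rho>\<^sup>k\<close> and letting
  \<open>g \<rightarrow> 0\<close>, \<open>\<rho> \<rightarrow> 1\<close>.
\<close>

definition buyer_utility :: "(real \<times> real \<Rightarrow> real \<times> real) \<Rightarrow> (real \<times> real \<Rightarrow> real) \<Rightarrow> real \<times> real \<Rightarrow> real" where
  "buyer_utility q s x = dot2 (q x) x - s x"

definition induced_payment1 :: "(real \<times> real \<Rightarrow> real \<times> real) \<Rightarrow> (real \<times> real \<Rightarrow> real) \<Rightarrow> real \<times> real \<Rightarrow> real" where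
  "induced_payment1 q s x = fst (q x) * fst x - (buyer_utility q s x - buyer_utility q s (0, snd x))"

definition induced_payment2 :: "(real \<times> real \<Rightarrow> real \<times> real) \<Rightarrow> (real \<times> real \<Rightarrow> real) \<Rightarrow> real \<times> real \<Rightarrow> real" where
  "induced_payment2 q s x = snd (q x) * snd x - (buyer_utility q s x - buyer_utility q s (fst x, 0))"

definition single_good_payment_rule :: "(real \<Rightarrow> real) \<Rightarrow> (real \<Rightarrow> real) \<Rightarrow> bool" where
  "single_good_payment_rule q p \<longleftrightarrow>
     (\<forall>y\<ge>0. 0 \<le> q y \<and> q y \<le> 1 \<and> 0 \<le> p y \<and> p y \<le> y) \<and>
     (\<forall>y y'. 0 \<le> y \<longrightarrow> y \<le> y' \<longrightarrow> q y \<le> q y' \<and> p y' - p y \<le> (q y' - q y) * y')"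

lemma nonneg2_Pair_iff [simp]: "(a, c) \<in> nonneg2 \<longleftrightarrow> 0 \<le> a \<and> 0 \<le> c"
  by (simp add: nonneg2_def)

lemma IC_IR_mechanism_utility_nonneg:
  "IC_IR_mechanism q s \<Longrightarrow> x \<in> nonneg2 \<Longrightarrow> 0 \<le> buyer_utility q s x"
  unfolding IC_IR_mechanism_def buyer_utility_def by blast

lemma IC_IR_mechanism_allocation_bounds:
  assumes "IC_IR_mechanism q s" "x \<in> nonneg2"
  shows "0 \<le> fst (q x)" "fst (q x) \<le> 1" "0 \<le> snd (q x)" "snd (q x) \<le> 1"
  using assms unfolding IC_IR_mechanism_def by auto

lemma IC_IR_mechanism_utility_increment:
  assumes "IC_IR_mechanism q s" "(a, c) \<in> nonneg2" "(a', c') \<in> nonneg2"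
  shows "fst (q (a, c)) * (a' - a) + snd (q (a, c)) * (c' - c)
           \<le> buyer_utility q s (a', c') - buyer_utility q s (a, c)"
  using assms unfolding IC_IR_mechanism_def buyer_utility_def dot2_def
  by (fastforce simp: algebra_simps)

lemma payment_le_induced_payments_plus_min:
  assumes m: "IC_IR_mechanism q s" and "0 \<le> a" "0 \<le> c"
  shows "s (a, c) \<le> induced_payment1 q s (a, c) + induced_payment2 q s (a, c) + min a c"
proof -
  have "fst (q (a, c)) * a \<le> a" "snd (q (a, c)) * c \<le> c"
    using IC_IR_mechanism_allocation_bounds[OF m, of "(a, c)"] assms
    by (simp_all add: mult_left_le_one_le)
  then show ?thesis
    using IC_IR_mechanism_utility_increment[OF m, of a c 0 c]
      IC_IR_mechanism_utility_increment[OF m, of a c a 0]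
      IC_IR_mechanism_utility_nonneg[OF m, of "(0, c)"]
      IC_IR_mechanism_utility_nonneg[OF m, of "(a, 0)"] assms
    by (simp add: induced_payment1_def induced_payment2_def buyer_utility_def dot2_def min_def)
qed

lemma induced_payment1_single_good:
  assumes m: "IC_IR_mechanism q s" and c: "0 \<le> c"
  shows "single_good_payment_rule (\<lambda>a. fst (q (a, c))) (\<lambda>a. induced_payment1 q s (a, c))"
  unfolding single_good_payment_rule_def
proof safe
  fix y y' :: real assume y: "0 \<le> y" "y \<le> y'"
  have inc: "fst (q (y, c)) * (y' - y) \<le> buyer_utility q s (y', c) - buyer_utility q s (y, c)"
            "fst (q (y', c)) * (y - y') \<le> buyer_utility q s (y, c) - buyer_utility q s (y', c)"
    using IC_IR_mechanism_utility_increment[OF m, of y c y' c]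
      IC_IR_mechanism_utility_increment[OF m, of y' c y c] y c by simp_all
  then have "0 \<le> (fst (q (y', c)) - fst (q (y, c))) * (y' - y)"
    by (simp add: algebra_simps)
  then show "fst (q (y, c)) \<le> fst (q (y', c))"
    using y by (cases "y = y'") (auto simp: zero_le_mult_iff)
  show "induced_payment1 q s (y', c) - induced_payment1 q s (y, c)
          \<le> (fst (q (y', c)) - fst (q (y, c))) * y'"
    using inc(1) by (simp add: induced_payment1_def algebra_simps)
next
  fix y :: real assume y: "0 \<le> y"
  show "0 \<le> fst (q (y, c))" "fst (q (y, c)) \<le> 1"
    using IC_IR_mechanism_allocation_bounds[OF m, of "(y, c)"] y c by simp_all
  have "0 \<le> fst (q (0, c)) * y" "fst (q (y, c)) * y \<le> y"
    using IC_IR_mechanism_allocation_bounds[OF m, of "(y, c)"]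
      IC_IR_mechanism_allocation_bounds[OF m, of "(0, c)"] y c
    by (simp_all add: mult_left_le_one_le)
  then show "induced_payment1 q s (y, c) \<le> y"
    using IC_IR_mechanism_utility_increment[OF m, of 0 c y c] y c
    by (simp add: induced_payment1_def)
  show "0 \<le> induced_payment1 q s (y, c)"
    using IC_IR_mechanism_utility_increment[OF m, of y c 0 c] y c
    by (simp add: induced_payment1_def)
qed

lemma induced_payment2_single_good:
  assumes m: "IC_IR_mechanism q s" and a: "0 \<le> a"
  shows "single_good_payment_rule (\<lambda>c. snd (q (a, c))) (\<lambda>c. induced_payment2 q s (a, c))"
  unfolding single_good_payment_rule_def
proof safe
  fix y y' :: real assume y: "0 \<le> y" "y \<le> y'"
  have inc: "snd (q (a, y)) * (y' - y) \<le> buyer_utility q s (a, y') - buyer_utility q s (a, y)"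
            "snd (q (a, y')) * (y - y') \<le> buyer_utility q s (a, y) - buyer_utility q s (a, y')"
    using IC_IR_mechanism_utility_increment[OF m, of a y a y']
      IC_IR_mechanism_utility_increment[OF m, of a y' a y] y a by simp_all
  then have "0 \<le> (snd (q (a, y')) - snd (q (a, y))) * (y' - y)"
    by (simp add: algebra_simps)
  then show "snd (q (a, y)) \<le> snd (q (a, y'))"
    using y by (cases "y = y'") (auto simp: zero_le_mult_iff)
  show "induced_payment2 q s (a, y') - induced_payment2 q s (a, y)
          \<le> (snd (q (a, y')) - snd (q (a, y))) * y'"
    using inc(1) by (simp add: induced_payment2_def algebra_simps)
next
  fix y :: real assume y: "0 \<le> y"
  show "0 \<le> snd (q (a, y))" "snd (q (a, y)) \<le> 1"
    using IC_IR_mechanism_allocation_bounds[OF m, of "(a, y)"] y a by simp_all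
  have "0 \<le> snd (q (a, 0)) * y" "snd (q (a, y)) * y \<le> y"
    using IC_IR_mechanism_allocation_bounds[OF m, of "(a, y)"]
      IC_IR_mechanism_allocation_bounds[OF m, of "(a, 0)"] y a
    by (simp_all add: mult_left_le_one_le)
  then show "induced_payment2 q s (a, y) \<le> y"
    using IC_IR_mechanism_utility_increment[OF m, of a 0 a y] y a
    by (simp add: induced_payment2_def)
  show "0 \<le> induced_payment2 q s (a, y)"
    using IC_IR_mechanism_utility_increment[OF m, of a y a 0] y a
    by (simp add: induced_payment2_def)
qed

definition geometric_grid :: "real \<Rightarrow> real \<Rightarrow> nat \<Rightarrow> real" where
  "geometric_grid g \<rho> k = g * \<rho> ^ k"

lemma geometric_grid_pos: "0 < g \<Longrightarrow> 1 < \<rho> \<Longrightarrow> 0 < geometric_grid g \<rho> k"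
  by (simp add: geometric_grid_def)

lemma geometric_grid_mono: "0 < g \<Longrightarrow> 1 < \<rho> \<Longrightarrow> k \<le> n \<Longrightarrow> geometric_grid g \<rho> k \<le> geometric_grid g \<rho> n"
  by (simp add: geometric_grid_def power_increasing)

lemma geometric_grid_Suc: "geometric_grid g \<rho> (Suc k) = \<rho> * geometric_grid g \<rho> k"
  by (simp add: geometric_grid_def)

lemma geometric_grid_bracket:
  assumes "0 < g" "1 < \<rho>" "g \<le> y"
  obtains m where "geometric_grid g \<rho> m \<le> y" "y < geometric_grid g \<rho> (Suc m)"
proof -
  obtain N where "y / g < \<rho> ^ N" using real_arch_pow[OF assms(2)] by blast
  then have ex: "\<exists>N. y < geometric_grid g \<rho> N"
    using assms by (auto simp: geometric_grid_def field_simps)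
  define n where "n = (LEAST N. y < geometric_grid g \<rho> N)"
  have n: "y < geometric_grid g \<rho> n" "\<And>k. k < n \<Longrightarrow> geometric_grid g \<rho> k \<le> y"
    unfolding n_def using LeastI_ex[OF ex] not_less_Least by (blast, fastforce)
  then show ?thesis using that assms by (cases n) (auto simp: geometric_grid_def)
qed

lemma sum_lessThan_le_suminf_indicator:
  fixes w :: "nat \<Rightarrow> ennreal"
  assumes "\<And>k. k < n \<Longrightarrow> x \<in> A k"
  shows "(\<Sum>k<n. w k) \<le> (\<Sum>k. w k * indicator (A k) x)"
proof -
  have "(\<Sum>k<n. w k) = (\<Sum>k<n. w k * indicator (A k) x)"
    using assms by (intro sum.cong) auto
  also have "\<dots> \<le> (\<Sum>k. w k * indicator (A k) x)"
    by (rule sum_le_suminf) auto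
  finally show ?thesis .
qed

lemma nn_integral_le_const_plus_suminf_indicator:
  fixes w :: "nat \<Rightarrow> ennreal"
  assumes "prob_space D" and A: "\<And>k. A k \<in> sets D"
    and f: "AE x in D. f x \<le> c + (\<Sum>k. w k * indicator (A k) x)"
  shows "(\<integral>\<^sup>+ x. f x \<partial>D) \<le> c + (\<Sum>k. w k * emeasure D (A k))"
proof -
  interpret prob_space D by fact
  have "(\<integral>\<^sup>+ x. f x \<partial>D) \<le> (\<integral>\<^sup>+ x. c + (\<Sum>k. w k * indicator (A k) x) \<partial>D)"
    using f by (rule nn_integral_mono_AE)
  also have "\<dots> = c + (\<Sum>k. \<integral>\<^sup>+ x. w k * indicator (A k) x \<partial>D)"
    using A by (simp add: nn_integral_add nn_integral_suminf emeasure_space_1)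
  also have "\<dots> = c + (\<Sum>k. w k * emeasure D (A k))"
    using A by (simp add: nn_integral_cmult_indicator)
  finally show ?thesis .
qed

text \<open>A discrete form of Myerson's bound \<open>p y \<le> \<integral>\<^sub>0\<^sup>y t dq(t)\<close>.\<close>

lemma payment_le_geometric_grid_partial_sum:
  assumes rule: "single_good_payment_rule q p" and g: "0 < g" and \<rho>: "1 < \<rho>" and y: "0 \<le> y"
  defines "G \<equiv> geometric_grid g \<rho>"
  obtains n where "p y \<le> g + (\<Sum>k<n. \<rho> * (q (G (Suc k)) - q (G k)) * G k)" "\<And>k. k < n \<Longrightarrow> G k \<le> y"
proof -
  define \<Delta> where "\<Delta> k = q (G (Suc k)) - q (G k)" for k
  have G: "0 < G k" "G k \<le> G (Suc k)" "G (Suc k) = \<rho> * G k" for k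
    using g \<rho> by (simp_all add: G_def geometric_grid_pos geometric_grid_mono geometric_grid_Suc)
  have q: "0 \<le> x \<Longrightarrow> x \<le> x' \<Longrightarrow> q x \<le> q x' \<and> p x' - p x \<le> (q x' - q x) * x'"
      and p: "0 \<le> x \<Longrightarrow> p x \<le> x" for x x'
    using rule unfolding single_good_payment_rule_def by auto
  have \<Delta>: "0 \<le> \<Delta> k" for k
    using q[of "G k" "G (Suc k)"] G[of k] by (simp add: \<Delta>_def)
  have grid: "p (G n) \<le> g + (\<Sum>k<n. \<rho> * \<Delta> k * G k)" for n
  proof (induction n)
    case 0
    then show ?case using p[of g] g by (simp add: G_def geometric_grid_def)
  next
    case (Suc n)
    have "p (G (Suc n)) - p (G n) \<le> \<Delta> n * G (Suc n)"
      using q[of "G n" "G (Suc n)"] G[of n] by (simp add: \<Delta>_def)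
    then show ?case using Suc G(3)[of n] by (simp add: algebra_simps)
  qed
  show ?thesis
  proof (cases "y < g")
    case True
    show ?thesis by (rule that[of 0]) (use p[OF y] True in simp_all)
  next
    case False
    then obtain m where m: "G m \<le> y" "y < G (Suc m)"
      using geometric_grid_bracket[OF g \<rho>, of y] unfolding G_def by force
    have "q y \<le> q (G (Suc m))" "p y - p (G m) \<le> (q y - q (G m)) * y"
      using q[of y "G (Suc m)"] q[of "G m" y] m G(1)[of m] y by simp_all
    then have "p y - p (G m) \<le> \<Delta> m * G (Suc m)"
      using m y \<Delta>[of m] unfolding \<Delta>_def by (smt (verit, best) mult_mono)
    then have "p y \<le> g + (\<Sum>k<Suc m. \<rho> * \<Delta> k * G k)"
      using grid[of m] G(3)[of m] by (simp add: algebra_simps)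
    moreover have "G k \<le> y" if "k < Suc m" for k
      using that m(1) g \<rho> geometric_grid_mono[of g \<rho> k m] by (simp add: G_def)
    ultimately show ?thesis unfolding \<Delta>_def by (rule that)
  qed
qed

lemma payment_le_geometric_grid_sum:
  assumes rule: "single_good_payment_rule q p" and g: "0 < g" and \<rho>: "1 < \<rho>" and y: "0 \<le> y"
  defines "G \<equiv> geometric_grid g \<rho>"
  shows "ennreal (p y)
           \<le> ennreal g + (\<Sum>k. ennreal (\<rho> * (q (G (Suc k)) - q (G k)) * G k) * indicator {G k..} y)"
proof -
  obtain n where n: "p y \<le> g + (\<Sum>k<n. \<rho> * (q (G (Suc k)) - q (G k)) * G k)" "\<And>k. k < n \<Longrightarrow> G k \<le> y"
    using payment_le_geometric_grid_partial_sum[OF rule g \<rho> y] unfolding G_def by blast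
  have "0 \<le> \<rho> * (q (G (Suc k)) - q (G k)) * G k" for k
    using rule g \<rho> geometric_grid_pos[OF g \<rho>, of k] geometric_grid_mono[OF g \<rho>, of k "Suc k"]
    unfolding single_good_payment_rule_def G_def by simp
  moreover have "ennreal (p y) \<le> ennreal (g + (\<Sum>k<n. \<rho> * (q (G (Suc k)) - q (G k)) * G k))"
    using n(1) by (rule ennreal_leI)
  ultimately have "ennreal (p y) \<le> ennreal g + (\<Sum>k<n. ennreal (\<rho> * (q (G (Suc k)) - q (G k)) * G k))"
    using g by (simp add: sum_nonneg)
  also have "\<dots> \<le> ennreal g + (\<Sum>k. ennreal (\<rho> * (q (G (Suc k)) - q (G k)) * G k) * indicator {G k..} y)"
    using n(2) by (intro add_left_mono sum_lessThan_le_suminf_indicator) simp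
  finally show ?thesis .
qed

lemma nn_integral_single_good_payment_le_grid:
  assumes D: "prob_space D" "sets D = sets borel" and nonneg: "AE x in D. 0 \<le> x"
    and tail: "\<And>y. 0 \<le> y \<Longrightarrow> y * measure D {y..} \<le> r"
    and rule: "single_good_payment_rule q p" and g: "0 < g" and \<rho>: "1 < \<rho>"
  shows "(\<integral>\<^sup>+ x. ennreal (p x) \<partial>D) \<le> ennreal (g + \<rho> * r)"
proof -
  interpret prob_space D by fact
  define G where "G = geometric_grid g \<rho>"
  define \<Delta> where "\<Delta> k = q (G (Suc k)) - q (G k)" for k
  have G: "0 < G k" "G k \<le> G (Suc k)" for k
    using g \<rho> by (simp_all add: G_def geometric_grid_pos geometric_grid_mono)
  have q: "0 \<le> x \<Longrightarrow> 0 \<le> q x \<and> q x \<le> 1" "0 \<le> x \<Longrightarrow> x \<le> x' \<Longrightarrow> q x \<le> q x'" for x x'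
    using rule unfolding single_good_payment_rule_def by auto
  have \<Delta>: "0 \<le> \<Delta> k" for k
    using q(2)[of "G k" "G (Suc k)"] G[of k] by (simp add: \<Delta>_def)
  have r: "0 \<le> r" using tail[of 0] by simp
  have "(\<integral>\<^sup>+ x. ennreal (p x) \<partial>D)
          \<le> ennreal g + (\<Sum>k. ennreal (\<rho> * \<Delta> k * G k) * emeasure D {G k..})"
    using D(2) nonneg payment_le_geometric_grid_sum[OF rule g \<rho>]
    by (intro nn_integral_le_const_plus_suminf_indicator[OF D(1)])
       (auto simp: \<Delta>_def G_def elim!: eventually_mono)
  also have "\<dots> \<le> ennreal g + (\<Sum>k. ennreal (\<rho> * r * \<Delta> k))"
  proof (intro add_left_mono suminf_le)
    fix k
    have "ennreal (\<rho> * \<Delta> k * G k) * emeasure D {G k..} = ennreal (\<rho> * \<Delta> k * (G k * measure D {G k..}))"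
      using \<rho> \<Delta>[of k] G(1)[of k] by (simp add: emeasure_eq_measure ennreal_mult[symmetric] mult.assoc)
    also have "\<dots> \<le> ennreal (\<rho> * \<Delta> k * r)"
      using tail[of "G k"] G(1)[of k] \<Delta>[of k] \<rho> by (intro ennreal_leI mult_left_mono) auto
    finally show "ennreal (\<rho> * \<Delta> k * G k) * emeasure D {G k..} \<le> ennreal (\<rho> * r * \<Delta> k)"
      by (simp add: ac_simps)
  qed auto
  also have "\<dots> \<le> ennreal g + ennreal (\<rho> * r)"
  proof (intro add_left_mono, subst suminf_eq_SUP, rule SUP_least)
    fix n
    have "(\<Sum>k<n. \<Delta> k) = q (G n) - q (G 0)"
      unfolding \<Delta>_def by (rule sum_lessThan_telescope)
    also have "\<dots> \<le> 1" using q(1)[of "G n"] q(1)[of "G 0"] G(1)[of n] G(1)[of 0] by simp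
    finally have "(\<Sum>k<n. \<rho> * r * \<Delta> k) \<le> \<rho> * r"
      using \<rho> r by (simp add: sum_distrib_left[symmetric] mult_left_le)
    then show "(\<Sum>k<n. ennreal (\<rho> * r * \<Delta> k)) \<le> ennreal (\<rho> * r)"
      using \<rho> r \<Delta> by (simp add: ennreal_leI)
  qed
  finally show ?thesis
    using g \<rho> r by simp
qed

lemma nn_integral_single_good_payment_le:
  assumes D: "prob_space D" "sets D = sets borel" and nonneg: "AE x in D. 0 \<le> x"
    and tail: "\<And>y. 0 \<le> y \<Longrightarrow> y * measure D {y..} \<le> r"
    and rule: "single_good_payment_rule q p"
  shows "(\<integral>\<^sup>+ x. ennreal (p x) \<partial>D) \<le> ennreal r"
proof (rule ennreal_le_epsilon)
  fix e :: real assume e: "0 < e"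
  have r: "0 \<le> r" using tail[of 0] by simp
  define \<rho> where "\<rho> = 1 + e / (2 * (r + 1))"
  have "\<rho> * r = r + e / 2 * (r / (r + 1))"
    using r by (simp add: \<rho>_def field_simps)
  also have "\<dots> \<le> r + e / 2"
    using e r by (intro add_left_mono mult_left_le) auto
  finally have "e / 2 + \<rho> * r \<le> r + e" by simp
  have "(\<integral>\<^sup>+ x. ennreal (p x) \<partial>D) \<le> ennreal (e / 2 + \<rho> * r)"
    using e r by (intro nn_integral_single_good_payment_le_grid[OF D nonneg tail rule])
      (auto simp: \<rho>_def)
  also have "\<dots> \<le> ennreal (r + e)"
    using \<open>e / 2 + \<rho> * r \<le> r + e\<close> by (rule ennreal_leI)
  finally show "(\<integral>\<^sup>+ x. ennreal (p x) \<partial>D) \<le> ennreal r + ennreal e"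
    using r e by simp
qed

text \<open>
  The primitive of \<open>min 1 (s\<^sup>2 / t\<^sup>2)\<close>, which dominates \<open>P[X\<^sub>1 \<ge> t] P[X\<^sub>2 \<ge> t]\<close> when
  \<open>s\<^sup>2 = r\<^sub>1 r\<^sub>2\<close>; its total mass is \<open>2 s\<close>.
\<close>
definition min_potential :: "real \<Rightarrow> real \<Rightarrow> real" where
  "min_potential s t = (if t \<le> s then t else 2 * s - s\<^sup>2 / t)"

lemma min_potential_bounds:
  assumes "0 \<le> s" "0 \<le> t"
  shows "0 \<le> min_potential s t" "min_potential s t \<le> 2 * s"
proof -
  have "s\<^sup>2 / t \<le> s \<and> 0 \<le> s\<^sup>2 / t" if "s < t"
    using that assms by (simp add: divide_le_eq power2_eq_square mult_left_mono)
  then show "0 \<le> min_potential s t" "min_potential s t \<le> 2 * s"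
    using assms by (auto simp: min_potential_def)
qed

lemma min_potential_increment_crossing:
  assumes a: "0 < a" and \<rho>: "1 < \<rho>" and s: "a < s" "s < \<rho> * a"
  shows "(\<rho> - 1) * a / \<rho> \<le> min_potential s (\<rho> * a) - min_potential s a"
proof -
  define b where "b = \<rho> * a"
  have b: "0 < b" using a \<rho> by (simp add: b_def)
  have "b * ((\<rho> - 1) * a / \<rho>) \<le> b * (2 * s - s * s / b - a)"
  proof -
    have "b * (s * s / b) = s * s" using b by simp
    moreover have "b * ((\<rho> - 1) * a / \<rho>) = (b - a) * a"
      using \<rho> by (simp add: b_def field_simps)
    ultimately have "b * (2 * s - s * s / b - a) - b * ((\<rho> - 1) * a / \<rho>) = (s - a) * (2 * b - s - a)"
      by (simp add: algebra_simps)
    also have "0 \<le> \<dots>" using s by (simp add: b_def)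
    finally show ?thesis by simp
  qed
  then have "(\<rho> - 1) * a / \<rho> \<le> 2 * s - s * s / b - a"
    using b by (subst (asm) mult_le_cancel_left_pos) auto
  then show ?thesis
    using s by (simp add: b_def min_potential_def power2_eq_square)
qed

text \<open>
  The potential grows at rate \<open>1 \<ge> m\<close> below \<open>s\<close> and at rate \<open>s\<^sup>2 / t\<^sup>2 \<ge> m a\<^sup>2 / t\<^sup>2\<close> above it;
  the factor \<open>(1 + \<delta>)\<^sup>2\<close> pays for evaluating the rate at the right end of the step.
\<close>

lemma min_potential_increment:
  fixes a \<delta> m s :: real
  assumes a: "0 < a" and \<delta>: "0 < \<delta>" and m: "0 \<le> m" "m \<le> 1" and s: "0 \<le> s"
    and tail: "a * a * m \<le> s * s"
  shows "\<delta> * a * m \<le> (1 + \<delta>)\<^sup>2 * (min_potential s ((1 + \<delta>) * a) - min_potential s a)"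
proof -
  define \<rho> where "\<rho> = 1 + \<delta>"
  define b where "b = \<rho> * a"
  let ?\<Phi> = "min_potential s"
  have \<rho>: "1 < \<rho>" using \<delta> by (simp add: \<rho>_def)
  have b: "a < b" "b - a = \<delta> * a" using a \<rho> by (simp_all add: b_def \<rho>_def algebra_simps)
  have \<rho>2: "1 \<le> \<rho>\<^sup>2" using \<rho> by simp
  have small: "\<delta> * a * m \<le> \<delta> * a"
    using a \<delta> m by (simp add: mult_left_le)
  have large: "\<delta> * a * m \<le> \<delta> * (s * s) / a"
  proof -
    have "\<delta> * a * m = \<delta> * (a * a * m) / a" using a by (simp add: field_simps)
    also have "\<dots> \<le> \<delta> * (s * s) / a" using tail a \<delta> by (intro divide_right_mono mult_left_mono) auto
    finally show ?thesis .
  qed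
  consider "b \<le> s" | "s \<le> a" | "a < s" "s < b" by linarith
  then have "\<delta> * a * m \<le> \<rho>\<^sup>2 * (?\<Phi> b - ?\<Phi> a)"
  proof cases
    case 1
    then have "?\<Phi> b - ?\<Phi> a = \<delta> * a" using b by (simp add: min_potential_def)
    then show ?thesis
      using small mult_right_mono[OF \<rho>2, of "\<delta> * a"] a \<delta> by simp
  next
    case 2
    have "?\<Phi> a = 2 * s - s * s / a" "?\<Phi> b = 2 * s - s * s / b"
      using 2 b a by (auto simp: min_potential_def power2_eq_square)
    then have "?\<Phi> b - ?\<Phi> a = s * s / a - s * s / b" by simp
    also have "\<dots> = \<delta> * (s * s) / (\<rho> * a)"
      using a \<rho> by (simp add: b_def divide_simps) (simp add: \<rho>_def algebra_simps)
    finally have "\<rho>\<^sup>2 * (?\<Phi> b - ?\<Phi> a) = \<rho> * (\<delta> * (s * s) / a)"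
      using a \<rho> by (simp add: power2_eq_square)
    moreover have "\<delta> * (s * s) / a \<le> \<rho> * (\<delta> * (s * s) / a)"
      using mult_right_mono[of 1 \<rho> "\<delta> * (s * s) / a"] \<rho> a \<delta> by simp
    ultimately show ?thesis using large by linarith
  next
    case 3
    then have inc: "\<delta> * a / \<rho> \<le> ?\<Phi> b - ?\<Phi> a"
      using min_potential_increment_crossing[OF a \<rho>, of s] by (simp add: b_def \<rho>_def)
    have "0 < \<delta> * a / \<rho>" using a \<delta> \<rho> by simp
    then have "0 \<le> ?\<Phi> b - ?\<Phi> a" using inc by linarith
    have "\<delta> * a \<le> \<rho> * (?\<Phi> b - ?\<Phi> a)" using inc \<rho> by (simp add: field_simps)
    also have "\<dots> \<le> \<rho>\<^sup>2 * (?\<Phi> b - ?\<Phi> a)"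
      using mult_left_mono[of 1 \<rho> \<rho>] \<rho> \<open>0 \<le> ?\<Phi> b - ?\<Phi> a\<close>
      by (intro mult_right_mono) (simp_all add: power2_eq_square)
    finally show ?thesis using small by linarith
  qed
  then show ?thesis by (simp add: \<rho>_def b_def)
qed

lemma le_geometric_grid_sum:
  fixes t :: real
  assumes g: "0 < g" and \<delta>: "0 < \<delta>"
  defines "G \<equiv> geometric_grid g (1 + \<delta>)"
  shows "ennreal t \<le> ennreal g + (\<Sum>k. ennreal (\<delta> * G k) * indicator {G k..} t)"
proof (cases "t < g")
  case True
  then show ?thesis by (intro add_increasing2 ennreal_leI) auto
next
  case False
  have \<rho>: "1 < 1 + \<delta>" using \<delta> by simp
  obtain m where m: "G m \<le> t" "t < G (Suc m)"
    using False geometric_grid_bracket[OF g \<rho>, of t] unfolding G_def by force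
  have G: "0 < G k" for k using g \<rho> by (simp add: G_def geometric_grid_pos)
  have geometric_sum: "G n = g + (\<Sum>k<n. \<delta> * G k)" for n
    by (induction n) (simp_all add: G_def geometric_grid_def algebra_simps)
  have "t \<le> g + (\<Sum>k<Suc m. \<delta> * G k)" using m(2) geometric_sum[of "Suc m"] by linarith
  then have "ennreal t \<le> ennreal (g + (\<Sum>k<Suc m. \<delta> * G k))" by (rule ennreal_leI)
  also have "\<dots> = ennreal g + (\<Sum>k<Suc m. ennreal (\<delta> * G k))"
    using g \<delta> G by (simp add: sum_nonneg less_imp_le)
  also have "\<dots> \<le> ennreal g + (\<Sum>k. ennreal (\<delta> * G k) * indicator {G k..} t)"
  proof (intro add_left_mono sum_lessThan_le_suminf_indicator)
    fix k assume "k < Suc m"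
    then have "G k \<le> G m" unfolding G_def by (intro geometric_grid_mono[OF g \<rho>]) simp
    then show "t \<in> {G k..}" using m(1) by simp
  qed
  finally show ?thesis .
qed

lemma geometric_grid_weighted_sum_le:
  fixes g \<delta> s :: real and m :: "nat \<Rightarrow> real"
  defines "G \<equiv> geometric_grid g (1 + \<delta>)"
  assumes g: "0 < g" and \<delta>: "0 < \<delta>" and s: "0 \<le> s"
    and m: "\<And>k. 0 \<le> m k" "\<And>k. m k \<le> 1" "\<And>k. G k * G k * m k \<le> s * s"
  shows "(\<Sum>k<n. \<delta> * G k * m k) \<le> (1 + \<delta>)\<^sup>2 * (2 * s)"
proof -
  have G: "0 < G k" for k using g \<delta> by (simp add: G_def geometric_grid_pos)
  have "(\<Sum>k<n. \<delta> * G k * m k)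
      \<le> (\<Sum>k<n. (1 + \<delta>)\<^sup>2 * (min_potential s (G (Suc k)) - min_potential s (G k)))"
    using min_potential_increment[OF G \<delta> m(1,2) s m(3)]
    by (intro sum_mono) (simp add: G_def geometric_grid_Suc)
  also have "\<dots> = (1 + \<delta>)\<^sup>2 * (min_potential s (G n) - min_potential s (G 0))"
    by (simp add: sum_distrib_left[symmetric] sum_lessThan_telescope[of "\<lambda>k. min_potential s (G k)"])
  also have "\<dots> \<le> (1 + \<delta>)\<^sup>2 * (2 * s)"
    using min_potential_bounds[OF s less_imp_le[OF G[of 0]]] min_potential_bounds[OF s less_imp_le[OF G[of n]]]
    by (intro mult_left_mono) auto
  finally show ?thesis .
qed

lemma nn_integral_min_le_grid:
  fixes D1 D2 :: "real measure"
  assumes D1: "prob_space D1" "sets D1 = sets borel" and D2: "prob_space D2" "sets D2 = sets borel"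
    and tail1: "\<And>y. 0 \<le> y \<Longrightarrow> y * measure D1 {y..} \<le> r1"
    and tail2: "\<And>y. 0 \<le> y \<Longrightarrow> y * measure D2 {y..} \<le> r2"
    and g: "0 < g" and \<delta>: "0 < \<delta>"
  shows "(\<integral>\<^sup>+ x. ennreal (min (fst x) (snd x)) \<partial>(D1 \<Otimes>\<^sub>M D2))
           \<le> ennreal (g + (1 + \<delta>)\<^sup>2 * (2 * sqrt (r1 * r2)))"
proof -
  interpret P1: prob_space D1 by fact
  interpret P2: prob_space D2 by fact
  define s where "s = sqrt (r1 * r2)"
  define G where "G = geometric_grid g (1 + \<delta>)"
  define m where "m k = measure D1 {G k..} * measure D2 {G k..}" for k
  have r: "0 \<le> r1" "0 \<le> r2" using tail1[of 0] tail2[of 0] by simp_all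
  then have s: "0 \<le> s" "s * s = r1 * r2" by (simp_all add: s_def)
  have G: "0 < G k" for k using g \<delta> by (simp add: G_def geometric_grid_pos)
  have m: "0 \<le> m k" "m k \<le> 1" "G k * G k * m k \<le> s * s" for k
  proof -
    have "G k * measure D1 {G k..} * (G k * measure D2 {G k..}) \<le> r1 * r2"
      using tail1[of "G k"] tail2[of "G k"] G[of k] r by (intro mult_mono) auto
    then show "G k * G k * m k \<le> s * s" by (simp add: s m_def ac_simps)
  qed (auto simp: m_def mult_le_one)
  have product: "ennreal (\<delta> * G k) * emeasure (D1 \<Otimes>\<^sub>M D2) ({G k..} \<times> {G k..}) = ennreal (\<delta> * G k * m k)" for k
  proof -
    have "emeasure (D1 \<Otimes>\<^sub>M D2) ({G k..} \<times> {G k..}) = emeasure D1 {G k..} * emeasure D2 {G k..}"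
      using D1(2) D2(2) by (intro P2.emeasure_pair_measure_Times) auto
    then show ?thesis
      using \<delta> G[of k] by (simp add: P1.emeasure_eq_measure P2.emeasure_eq_measure m_def ennreal_mult)
  qed
  have "(\<integral>\<^sup>+ x. ennreal (min (fst x) (snd x)) \<partial>(D1 \<Otimes>\<^sub>M D2))
      \<le> ennreal g + (\<Sum>k. ennreal (\<delta> * G k) * emeasure (D1 \<Otimes>\<^sub>M D2) ({G k..} \<times> {G k..}))"
  proof (rule nn_integral_le_const_plus_suminf_indicator)
    show "prob_space (D1 \<Otimes>\<^sub>M D2)" by (rule prob_space_pair) fact+
    show "{G k..} \<times> {G k..} \<in> sets (D1 \<Otimes>\<^sub>M D2)" for k
      using D1(2) D2(2) by (intro pair_measureI) auto
    have ind: "indicator ({G k..} \<times> {G k..}) x = (indicator {G k..} (min (fst x) (snd x)) :: ennreal)" for k x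
      by (simp add: indicator_def mem_Times_iff)
    show "AE x in D1 \<Otimes>\<^sub>M D2. ennreal (min (fst x) (snd x))
        \<le> ennreal g + (\<Sum>k. ennreal (\<delta> * G k) * indicator ({G k..} \<times> {G k..}) x)"
      unfolding ind unfolding G_def by (intro AE_I2 le_geometric_grid_sum[OF g \<delta>])
  qed
  also have "\<dots> \<le> ennreal g + ennreal ((1 + \<delta>)\<^sup>2 * (2 * s))"
  proof (intro add_left_mono, subst suminf_eq_SUP, rule SUP_least)
    fix n
    show "(\<Sum>k<n. ennreal (\<delta> * G k) * emeasure (D1 \<Otimes>\<^sub>M D2) ({G k..} \<times> {G k..}))
        \<le> ennreal ((1 + \<delta>)\<^sup>2 * (2 * s))"
      using geometric_grid_weighted_sum_le[OF g \<delta> s(1) m(1,2) m(3)[unfolded G_def], of n, folded G_def]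
        \<delta> G m(1)
      by (simp add: product sum_nonneg less_imp_le ennreal_leI)
  qed
  finally show ?thesis using g s(1) by (simp add: s_def)
qed

lemma nn_integral_min_le:
  fixes D1 D2 :: "real measure"
  assumes D1: "prob_space D1" "sets D1 = sets borel" and D2: "prob_space D2" "sets D2 = sets borel"
    and tail1: "\<And>y. 0 \<le> y \<Longrightarrow> y * measure D1 {y..} \<le> r1"
    and tail2: "\<And>y. 0 \<le> y \<Longrightarrow> y * measure D2 {y..} \<le> r2"
  shows "(\<integral>\<^sup>+ x. ennreal (min (fst x) (snd x)) \<partial>(D1 \<Otimes>\<^sub>M D2)) \<le> ennreal (2 * sqrt (r1 * r2))"
proof (rule ennreal_le_epsilon)
  fix e :: real assume e: "0 < e"
  define b where "b = 2 * sqrt (r1 * r2)"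
  define \<delta> where "\<delta> = min 1 (e / (6 * (b + 1)))"
  have b: "0 \<le> b" using tail1[of 0] tail2[of 0] by (simp add: b_def)
  have \<delta>: "0 < \<delta>" "\<delta> \<le> 1" "\<delta> \<le> e / (6 * (b + 1))" using e b by (simp_all add: \<delta>_def)
  have "(1 + \<delta>)\<^sup>2 * b = b + \<delta> * (2 + \<delta>) * b" by (simp add: power2_eq_square algebra_simps)
  also have "\<dots> \<le> b + 3 * b * \<delta>"
    using \<delta> b by (intro add_left_mono) (simp add: mult_right_mono)
  also have "\<dots> \<le> b + 3 * b * (e / (6 * (b + 1)))"
    using \<delta>(3) b by (intro add_left_mono mult_left_mono) auto
  also have "\<dots> = b + e / 2 * (b / (b + 1))" using b by (simp add: field_simps)
  also have "\<dots> \<le> b + e / 2" using e b by (intro add_left_mono mult_left_le) auto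
  finally have "e / 2 + (1 + \<delta>)\<^sup>2 * b \<le> b + e" by simp
  have "(\<integral>\<^sup>+ x. ennreal (min (fst x) (snd x)) \<partial>(D1 \<Otimes>\<^sub>M D2)) \<le> ennreal (e / 2 + (1 + \<delta>)\<^sup>2 * b)"
    using e \<delta> unfolding b_def by (intro nn_integral_min_le_grid[OF D1 D2 tail1 tail2]) auto
  also have "\<dots> \<le> ennreal (b + e)"
    using \<open>e / 2 + (1 + \<delta>)\<^sup>2 * b \<le> b + e\<close> by (rule ennreal_leI)
  finally show "(\<integral>\<^sup>+ x. ennreal (min (fst x) (snd x)) \<partial>(D1 \<Otimes>\<^sub>M D2)) \<le> ennreal (2 * sqrt (r1 * r2)) + ennreal e"
    using b e by (simp add: b_def)
qed

lemma
  assumes "IC_IR_mechanism q s"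
  shows induced_payment1_borel_measurable: "induced_payment1 q s \<in> borel_measurable (borel \<Otimes>\<^sub>M borel)"
    and induced_payment2_borel_measurable: "induced_payment2 q s \<in> borel_measurable (borel \<Otimes>\<^sub>M borel)"
proof -
  have [measurable]: "q \<in> borel \<Otimes>\<^sub>M borel \<rightarrow>\<^sub>M borel \<Otimes>\<^sub>M borel" "s \<in> borel_measurable (borel \<Otimes>\<^sub>M borel)"
    using assms unfolding IC_IR_mechanism_def by (simp_all add: borel_prod)
  have [measurable]: "(\<lambda>x. (0, snd x)) \<in> borel \<Otimes>\<^sub>M borel \<rightarrow>\<^sub>M borel \<Otimes>\<^sub>M (borel :: real measure)"
    "(\<lambda>x. (fst x, 0)) \<in> borel \<Otimes>\<^sub>M borel \<rightarrow>\<^sub>M (borel :: real measure) \<Otimes>\<^sub>M borel"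
    by (simp_all add: measurable_Pair)
  show "induced_payment1 q s \<in> borel_measurable (borel \<Otimes>\<^sub>M borel)"
       "induced_payment2 q s \<in> borel_measurable (borel \<Otimes>\<^sub>M borel)"
    unfolding induced_payment1_def[abs_def] induced_payment2_def[abs_def] buyer_utility_def dot2_def
    by measurable
qed

lemma nn_integral_induced_payment1_le:
  fixes D1 D2 :: "real measure"
  assumes D1: "prob_space D1" "sets D1 = sets borel" and D2: "prob_space D2" "sets D2 = sets borel"
    and D1_nonneg: "AE x in D1. 0 \<le> x" and D2_nonneg: "AE y in D2. 0 \<le> y"
    and tail1: "\<And>y. 0 \<le> y \<Longrightarrow> y * measure D1 {y..} \<le> r1"
    and m: "IC_IR_mechanism q s"
  shows "(\<integral>\<^sup>+ x. ennreal (induced_payment1 q s x) \<partial>(D1 \<Otimes>\<^sub>M D2)) \<le> ennreal r1"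
proof -
  interpret P1: prob_space D1 by fact
  interpret P2: prob_space D2 by fact
  interpret P12: pair_sigma_finite D1 D2 by unfold_locales
  have "(\<lambda>x. ennreal (induced_payment1 q s x)) \<in> borel_measurable (D1 \<Otimes>\<^sub>M D2)"
    using induced_payment1_borel_measurable[OF m]
    by (simp add: measurable_cong_sets[OF sets_pair_measure_cong[OF D1(2) D2(2)] refl])
  then have "(\<integral>\<^sup>+ x. ennreal (induced_payment1 q s x) \<partial>(D1 \<Otimes>\<^sub>M D2))
      = (\<integral>\<^sup>+ y. (\<integral>\<^sup>+ x. ennreal (induced_payment1 q s (x, y)) \<partial>D1) \<partial>D2)"
    by (rule P12.nn_integral_snd[symmetric])
  also have "\<dots> \<le> (\<integral>\<^sup>+ y. ennreal r1 \<partial>D2)"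
    using D2_nonneg
    by (intro nn_integral_mono_AE)
       (auto elim!: eventually_mono intro!: nn_integral_single_good_payment_le[OF D1 D1_nonneg tail1]
         induced_payment1_single_good[OF m])
  finally show ?thesis by (simp add: P2.emeasure_space_1)
qed

lemma nn_integral_induced_payment2_le:
  fixes D1 D2 :: "real measure"
  assumes D1: "prob_space D1" "sets D1 = sets borel" and D2: "prob_space D2" "sets D2 = sets borel"
    and D1_nonneg: "AE x in D1. 0 \<le> x" and D2_nonneg: "AE y in D2. 0 \<le> y"
    and tail2: "\<And>y. 0 \<le> y \<Longrightarrow> y * measure D2 {y..} \<le> r2"
    and m: "IC_IR_mechanism q s"
  shows "(\<integral>\<^sup>+ x. ennreal (induced_payment2 q s x) \<partial>(D1 \<Otimes>\<^sub>M D2)) \<le> ennreal r2"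
proof -
  interpret P1: prob_space D1 by fact
  interpret P2: prob_space D2 by fact
  interpret P12: pair_sigma_finite D1 D2 by unfold_locales
  have "(\<lambda>x. ennreal (induced_payment2 q s x)) \<in> borel_measurable (D1 \<Otimes>\<^sub>M D2)"
    using induced_payment2_borel_measurable[OF m]
    by (simp add: measurable_cong_sets[OF sets_pair_measure_cong[OF D1(2) D2(2)] refl])
  then have "(\<integral>\<^sup>+ x. ennreal (induced_payment2 q s x) \<partial>(D1 \<Otimes>\<^sub>M D2))
      = (\<integral>\<^sup>+ x. (\<integral>\<^sup>+ y. ennreal (induced_payment2 q s (x, y)) \<partial>D2) \<partial>D1)"
    by (rule P2.nn_integral_fst[symmetric])
  also have "\<dots> \<le> (\<integral>\<^sup>+ x. ennreal r2 \<partial>D1)"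
    using D1_nonneg
    by (intro nn_integral_mono_AE)
       (auto elim!: eventually_mono intro!: nn_integral_single_good_payment_le[OF D2 D2_nonneg tail2]
         induced_payment2_single_good[OF m])
  finally show ?thesis by (simp add: P1.emeasure_space_1)
qed

lemma posted_price_revenue_le_Rev1:
  "0 \<le> p \<Longrightarrow> ereal (p * measure M {w \<in> space M. p \<le> X w}) \<le> Rev1 M X"
  unfolding Rev1_def by (intro SUP_upper) auto

lemma nn_integral_payment_bound_le:
  fixes D1 D2 :: "real measure"
  assumes D: "prob_space D1" "sets D1 = sets borel" "prob_space D2" "sets D2 = sets borel"
    and D_nonneg: "AE x in D1. 0 \<le> x" "AE y in D2. 0 \<le> y"
    and D_tail: "\<And>y. 0 \<le> y \<Longrightarrow> y * measure D1 {y..} \<le> r1" "\<And>y. 0 \<le> y \<Longrightarrow> y * measure D2 {y..} \<le> r2"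
    and m: "IC_IR_mechanism q s"
  shows "(\<integral>\<^sup>+ x. ennreal (induced_payment1 q s x) + ennreal (induced_payment2 q s x)
            + ennreal (min (fst x) (snd x)) \<partial>(D1 \<Otimes>\<^sub>M D2)) \<le> ennreal ((sqrt r1 + sqrt r2)\<^sup>2)"
proof -
  have r: "0 \<le> r1" "0 \<le> r2" using D_tail(1)[of 0] D_tail(2)[of 0] by simp_all
  have "(\<integral>\<^sup>+ x. ennreal (induced_payment1 q s x) + ennreal (induced_payment2 q s x)
            + ennreal (min (fst x) (snd x)) \<partial>(D1 \<Otimes>\<^sub>M D2))
      = (\<integral>\<^sup>+ x. ennreal (induced_payment1 q s x) \<partial>(D1 \<Otimes>\<^sub>M D2))
      + (\<integral>\<^sup>+ x. ennreal (induced_payment2 q s x) \<partial>(D1 \<Otimes>\<^sub>M D2))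
      + (\<integral>\<^sup>+ x. ennreal (min (fst x) (snd x)) \<partial>(D1 \<Otimes>\<^sub>M D2))"
    using induced_payment1_borel_measurable[OF m] induced_payment2_borel_measurable[OF m]
    by (simp add: nn_integral_add measurable_cong_sets[OF sets_pair_measure_cong[OF D(2,4)] refl])
  also have "\<dots> \<le> ennreal r1 + ennreal r2 + ennreal (2 * sqrt (r1 * r2))"
    by (intro add_mono nn_integral_induced_payment1_le[OF D D_nonneg D_tail(1) m]
        nn_integral_induced_payment2_le[OF D D_nonneg D_tail(2) m] nn_integral_min_le[OF D D_tail])
  also have "\<dots> = ennreal ((sqrt r1 + sqrt r2)\<^sup>2)"
    using r by (simp add: power2_eq_square algebra_simps real_sqrt_mult flip: ennreal_plus)
  finally show ?thesis .
qed

lemma measure_distr_atLeast: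
  fixes X :: "'a \<Rightarrow> real"
  assumes "X \<in> borel_measurable M"
  shows "measure (distr M borel X) {y..} = measure M {w \<in> space M. y \<le> X w}"
  using assms by (subst measure_distr) (auto intro!: arg_cong[where f = "measure M"])

lemma nn_integral_payment_le:
  fixes M :: "'a measure" and X1 X2 :: "'a \<Rightarrow> real"
  assumes "prob_space M" and [measurable]: "X1 \<in> borel_measurable M" "X2 \<in> borel_measurable M"
    and X1_nonneg: "\<And>w. w \<in> space M \<Longrightarrow> 0 \<le> X1 w"
    and X2_nonneg: "\<And>w. w \<in> space M \<Longrightarrow> 0 \<le> X2 w"
    and indep: "prob_space.indep_var M borel X1 borel X2"
    and tail1: "\<And>y. 0 \<le> y \<Longrightarrow> y * measure M {w \<in> space M. y \<le> X1 w} \<le> r1"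
    and tail2: "\<And>y. 0 \<le> y \<Longrightarrow> y * measure M {w \<in> space M. y \<le> X2 w} \<le> r2"
    and m: "IC_IR_mechanism q s"
  shows "(\<integral>\<^sup>+ w. ennreal (s (X1 w, X2 w)) \<partial>M) \<le> ennreal ((sqrt r1 + sqrt r2)\<^sup>2)"
proof -
  interpret prob_space M by fact
  define D1 where "D1 = distr M borel X1"
  define D2 where "D2 = distr M borel X2"
  define F where "F x = ennreal (induced_payment1 q s x) + ennreal (induced_payment2 q s x)
    + ennreal (min (fst x) (snd x))" for x
  have "(\<integral>\<^sup>+ w. ennreal (s (X1 w, X2 w)) \<partial>M) \<le> (\<integral>\<^sup>+ w. F (X1 w, X2 w) \<partial>M)"
  proof (intro nn_integral_mono)
    fix w assume "w \<in> space M"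
    then have "0 \<le> X1 w" "0 \<le> X2 w" using X1_nonneg X2_nonneg by auto
    then show "ennreal (s (X1 w, X2 w)) \<le> F (X1 w, X2 w)"
      using payment_le_induced_payments_plus_min[OF m] induced_payment1_single_good[OF m]
        induced_payment2_single_good[OF m]
      by (simp add: F_def single_good_payment_rule_def ennreal_leI flip: ennreal_plus)
  qed
  also have "\<dots> = (\<integral>\<^sup>+ x. F x \<partial>(D1 \<Otimes>\<^sub>M D2))"
  proof -
    have "D1 \<Otimes>\<^sub>M D2 = distr M (borel \<Otimes>\<^sub>M borel) (\<lambda>w. (X1 w, X2 w))"
      using indep unfolding indep_var_distribution_eq D1_def D2_def by simp
    moreover have "F \<in> borel_measurable (borel \<Otimes>\<^sub>M borel)"
      using induced_payment1_borel_measurable[OF m] induced_payment2_borel_measurable[OF m]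
      unfolding F_def by measurable
    ultimately show ?thesis by (simp add: nn_integral_distr)
  qed
  also have "\<dots> \<le> ennreal ((sqrt r1 + sqrt r2)\<^sup>2)"
    unfolding F_def
  proof (rule nn_integral_payment_bound_le[OF _ _ _ _ _ _ _ _ m])
    show "prob_space D1" "sets D1 = sets borel" "prob_space D2" "sets D2 = sets borel"
      unfolding D1_def D2_def by (simp_all add: prob_space_distr)
    show "AE x in D1. 0 \<le> x" "AE y in D2. 0 \<le> y"
      unfolding D1_def D2_def using X1_nonneg X2_nonneg by (simp_all add: AE_distr_iff)
    show "y * measure D1 {y..} \<le> r1" "y * measure D2 {y..} \<le> r2" if "0 \<le> y" for y
      using tail1[OF that] tail2[OF that] by (simp_all add: D1_def D2_def measure_distr_atLeast)
  qed
  finally show ?thesis .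
qed

theorem proposition7:
  fixes M :: "'a measure" and X1 X2 :: "'a \<Rightarrow> real" and r1 r2 :: real
  assumes "prob_space M"
    and "X1 \<in> borel_measurable M" and "X2 \<in> borel_measurable M"
    and "\<And>w. w \<in> space M \<Longrightarrow> X1 w \<ge> 0"
    and "\<And>w. w \<in> space M \<Longrightarrow> X2 w \<ge> 0"
    and "prob_space.indep_var M borel X1 borel X2"
    and "Rev1 M X1 = ereal r1" and "Rev1 M X2 = ereal r2"
  shows "Rev2 M X1 X2 \<le> ereal ((sqrt r1 + sqrt r2)\<^sup>2)"
  unfolding Rev2_def
proof (rule SUP_least, clarify)
  fix q s assume m: "IC_IR_mechanism q s"
  have "y * measure M {w \<in> space M. y \<le> X1 w} \<le> r1" "y * measure M {w \<in> space M. y \<le> X2 w} \<le> r2"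
    if "0 \<le> y" for y
    using posted_price_revenue_le_Rev1[OF that, of M X1] posted_price_revenue_le_Rev1[OF that, of M X2]
      assms(7,8) by simp_all
  then have "(\<integral>\<^sup>+ w. ennreal (s (X1 w, X2 w)) \<partial>M) \<le> ennreal ((sqrt r1 + sqrt r2)\<^sup>2)"
    using nn_integral_payment_le[OF assms(1-6) _ _ m] by blast
  then have "enn2ereal (\<integral>\<^sup>+ w. ennreal (s (X1 w, X2 w)) \<partial>M) \<le> ereal ((sqrt r1 + sqrt r2)\<^sup>2)"
    by (simp add: less_eq_ennreal.rep_eq)
  then show "ext_expectation M (\<lambda>w. snd (q, s) (X1 w, X2 w)) \<le> ereal ((sqrt r1 + sqrt r2)\<^sup>2)"
    unfolding ext_expectation_def by (auto intro: order_trans[OF ereal_diff_le_self])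
qed

end
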